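(* For every three-qubit state $\rho_{ABC}$, $$S^{\max}(\rho_{ABC})+2\,\tau(\rho_{ABC})\le 3,$$ where $S^{\max}(\rho_{ABC})=\max\{S_{AB},S_{AC},S_{BC}\}$.
   Context: For a two-qubit state $\rho$ let $t_{kl}=\mathrm{Tr}[\rho\,\sigma_k\otimes\sigma_l]$ ($\sigma_k$ Pauli matrices) and $S(\rho)=\sum_{k,l=1}^3 t_{kl}^2$; $S_{ij}=S(\rho_{ij})$ for the two-qubit reduced states $\rho_{ij}$ of $\rho_{ABC}$. $\tau$ is the three-tangle: for a pure state, $\tau=1-|\vec a|^2-\mathcal C_{AB}^2-\mathcal C_{AC}^2$, where $\vec a$ with $a_k=\mathrm{Tr}[\rho_A\sigma_k]$ is the Bloch vector of qubit $A$ and $\mathcal C_{ij}$ is the Wootters concurrence of $\rho_{ij}$ ($\mathcal C(\rho)=\max\{0,\lambda_1-\lambda_2-\lambda_3-\lambda_4\}$, $\lambda_i$ the decreasingly ordered square roots of the eigenvalues of $\rho(\sigma_2\otimes\sigma_2)\rho^*(\sigma_2\otimes\sigma_2)$); for a mixed state $\tau$ is the convex roof, i.e. the minimum of $\sum_n p_n\tau(\psi_n)$ over pure-state decompositions $\rho=\sum_n p_n|\psi_n\rangle\langle\psi_n|$. *)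

theory Defs
  imports "Jordan_Normal_Form.Matrix" "Jordan_Normal_Form.Char_Poly"
begin

text \<open>Qubit ordering for a three-qubit state: basis index 4*a + 2*b + c for qubits A,B,C.
  For two-qubit states: index 2*x + y.\<close>

definition pauli :: "nat \<Rightarrow> complex mat" where
  "pauli k = mat 2 2 (\<lambda>(i,j).
     if k = 1 then (if i \<noteq> j then 1 else 0)
     else if k = 2 then (if i = 0 \<and> j = 1 then - \<i> else if i = 1 \<and> j = 0 then \<i> else 0)
     else if k = 3 then (if i = j then (if i = 0 then 1 else -1) else 0)
     else (if i = j then 1 else 0))"

definition kron :: "complex mat \<Rightarrow> complex mat \<Rightarrow> complex mat" where
  "kron A B = mat (dim_row A * dim_row B) (dim_col A * dim_col B)
     (\<lambda>(i,j). A $$ (i div dim_row B, j div dim_col B) * B $$ (i mod dim_row B, j mod dim_col B))"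

definition adjoint :: "complex mat \<Rightarrow> complex mat" where
  "adjoint A = mat (dim_col A) (dim_row A) (\<lambda>(i,j). cnj (A $$ (j,i)))"

definition mconj :: "complex mat \<Rightarrow> complex mat" where
  "mconj A = mat (dim_row A) (dim_col A) (\<lambda>(i,j). cnj (A $$ (i,j)))"

definition mtrace :: "complex mat \<Rightarrow> complex" where
  "mtrace A = (\<Sum>i<dim_row A. A $$ (i,i))"

definition density_matrix :: "nat \<Rightarrow> complex mat \<Rightarrow> bool" where
  "density_matrix n \<rho> \<longleftrightarrow> \<rho> \<in> carrier_mat n n \<and> adjoint \<rho> = \<rho>
     \<and> (\<forall>v \<in> carrier_vec n. Re (\<Sum>i<n. \<Sum>j<n. cnj (v $ i) * \<rho> $$ (i,j) * v $ j) \<ge> 0)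
     \<and> mtrace \<rho> = 1"

definition red_AB :: "complex mat \<Rightarrow> complex mat" where
  "red_AB \<rho> = mat 4 4 (\<lambda>(i,j). \<Sum>c<2. \<rho> $$ (2*i + c, 2*j + c))"
definition red_AC :: "complex mat \<Rightarrow> complex mat" where
  "red_AC \<rho> = mat 4 4 (\<lambda>(i,j). \<Sum>b<2.
      \<rho> $$ (4*(i div 2) + 2*b + i mod 2, 4*(j div 2) + 2*b + j mod 2))"
definition red_BC :: "complex mat \<Rightarrow> complex mat" where
  "red_BC \<rho> = mat 4 4 (\<lambda>(i,j). \<Sum>a<2. \<rho> $$ (4*a + i, 4*a + j))"
definition red_A :: "complex mat \<Rightarrow> complex mat" where
  "red_A \<rho> = mat 2 2 (\<lambda>(i,j). \<Sum>m<4. \<rho> $$ (4*i + m, 4*j + m))"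

definition tcorr :: "complex mat \<Rightarrow> nat \<Rightarrow> nat \<Rightarrow> complex" where
  "tcorr \<rho> k l = mtrace (\<rho> * kron (pauli k) (pauli l))"

definition Scorr :: "complex mat \<Rightarrow> real" where
  "Scorr \<rho> = (\<Sum>k\<in>{1..3}. \<Sum>l\<in>{1..3}. (Re (tcorr \<rho> k l))\<^sup>2)"

definition wootters_R :: "complex mat \<Rightarrow> complex mat" where
  "wootters_R \<rho> = \<rho> * kron (pauli 2) (pauli 2) * mconj \<rho> * kron (pauli 2) (pauli 2)"

definition wootters_lambdas :: "complex mat \<Rightarrow> real list" where
  "wootters_lambdas \<rho> = rev (sorted_list_of_multiset
     (image_mset (\<lambda>\<mu>. sqrt (Re \<mu>)) (proots (char_poly (wootters_R \<rho>)))))"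

definition concurrence :: "complex mat \<Rightarrow> real" where
  "concurrence \<rho> = (let l = wootters_lambdas \<rho> in max 0 (l!0 - l!1 - l!2 - l!3))"

definition unit_vec8 :: "complex vec \<Rightarrow> bool" where
  "unit_vec8 \<psi> \<longleftrightarrow> \<psi> \<in> carrier_vec 8 \<and> (\<Sum>i<8. (cmod (\<psi> $ i))\<^sup>2) = 1"

definition proj :: "complex vec \<Rightarrow> complex mat" where
  "proj \<psi> = mat (dim_vec \<psi>) (dim_vec \<psi>) (\<lambda>(i,j). \<psi> $ i * cnj (\<psi> $ j))"

definition bloch_A :: "complex mat \<Rightarrow> nat \<Rightarrow> real" where
  "bloch_A \<rho> k = Re (mtrace (red_A \<rho> * pauli k))"

definition tau_pure :: "complex vec \<Rightarrow> real" where
  "tau_pure \<psi> = 1 - (\<Sum>k\<in>{1..3}. (bloch_A (proj \<psi>) k)\<^sup>2)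
      - (concurrence (red_AB (proj \<psi>)))\<^sup>2 - (concurrence (red_AC (proj \<psi>)))\<^sup>2"

definition pure_decomp :: "complex mat \<Rightarrow> (real \<times> complex vec) list \<Rightarrow> bool" where
  "pure_decomp \<rho> ds \<longleftrightarrow> (\<forall>(p,\<psi>) \<in> set ds. p \<ge> 0 \<and> unit_vec8 \<psi>)
     \<and> (\<Sum>(p,\<psi>)\<leftarrow>ds. p) = 1
     \<and> \<rho> = mat 8 8 (\<lambda>(i,j). \<Sum>(p,\<psi>)\<leftarrow>ds. complex_of_real p * (\<psi> $ i * cnj (\<psi> $ j)))"

definition tau :: "complex mat \<Rightarrow> real" where
  "tau \<rho> = Inf {(\<Sum>(p,\<psi>)\<leftarrow>ds. p * tau_pure \<psi>) | ds. pure_decomp \<rho> ds}"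

definition Smax :: "complex mat \<Rightarrow> real" where
  "Smax \<rho> = max (Scorr (red_AB \<rho>)) (max (Scorr (red_AC \<rho>)) (Scorr (red_BC \<rho>)))"

end

theory Submission
  imports Defs "Jordan_Normal_Form.Schur_Decomposition"
begin

(* For a pure state every two-qubit marginal is |f0><f0| + |f1><f1|. Its Wootters matrix factors
   through a 4x2 and a 2x4 matrix, so by Sylvester's identity its nonzero eigenvalues are those of
   T^* T, where T c d = (f c)^T (sigma_y (x) sigma_y) (f d); hence C^2 = |T|^2 - 2 |det T|. The value
   |det T| is the same for all three marginals, and the Coffman-Kundu-Wootters identities
   |T_AB|^2 + |T_AC|^2 = 2 - 2 tr rho_A^2 (and permutations) turn tau into 4 |det T|. Writing S
   through purities, S_AB = 4 tr rho_C^2 + 1 - 2 tr rho_A^2 - 2 tr rho_B^2, and the bounds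
   |T|^2 >= 2 |det T|, tr rho_X^2 >= 1/2 give S_XY + 2 tau <= 3.
   For mixed states S is a sum of squares of linear functionals of rho, hence convex; a pure-state
   decomposition exists (Cholesky), so S_max(rho) <= sum p_n S_max(psi_n) <= 3 - 2 sum p_n tau(psi_n),
   and the infimum over decompositions gives the claim. *)

lemma sum_lessThan_2: "(\<Sum>j<2. f j) = f 0 + f (1::nat)"
  by (simp add: numeral_2_eq_2)

lemma sum_lessThan_4: "(\<Sum>j<4. f j) = f 0 + f (1::nat) + f 2 + f 3"
  by (simp add: eval_nat_numeral)

lemma sum_lessThan_8: "(\<Sum>j<8. f j) = f 0 + f (1::nat) + f 2 + f 3 + f 4 + f 5 + f 6 + f 7"
  by (simp add: eval_nat_numeral)

lemma cmod_power2_eq_mult_cnj: "complex_of_real ((cmod z)\<^sup>2) = z * cnj z"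
  using complex_norm_square by simp

section \<open>Characteristic polynomials of small matrices\<close>

lemma det_expand_row0:
  assumes "A \<in> carrier_mat (Suc n) (Suc n)"
  shows "det A = (\<Sum>j<Suc n. A $$ (0,j) * ((-1)^j * det (mat_delete A 0 j)))"
  using laplace_expansion_row[OF assms, of 0] by (simp add: cofactor_def)

lemma det_2x2:
  assumes A: "A \<in> carrier_mat 2 2"
  shows "det A = A $$ (0,0) * A $$ (1,1) - A $$ (0,1) * A $$ (1,0)"
proof -
  have det_1x1: "det B = B $$ (0,0)" if B: "B \<in> carrier_mat (Suc 0) (Suc 0)" for B :: "'a mat"
    using det_expand_row0[OF B] mat_delete_carrier[OF B, of 0 0] by simp
  have A': "A \<in> carrier_mat (Suc 1) (Suc 1)" using A by (simp add: numeral_2_eq_2)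
  have "det (mat_delete A 0 j) = mat_delete A 0 j $$ (0,0)" for j
    using mat_delete_carrier[OF A', of 0 j] by (intro det_1x1) simp
  then show ?thesis
    using det_expand_row0[OF A'] A by (simp add: mat_delete_def)
qed

lemma char_poly_2x2:
  fixes A :: "'a :: field_char_0 mat"
  assumes A: "A \<in> carrier_mat 2 2"
  shows "char_poly A = [:det A, - (A $$ (0,0) + A $$ (1,1)), 1:]"
proof -
  have "poly (char_poly A) x = poly [:det A, - (A $$ (0,0) + A $$ (1,1)), 1:] x" for x
  proof -
    have M: "- char_matrix A x \<in> carrier_mat 2 2" using A by simp
    show ?thesis
      unfolding char_poly_matrix[OF A] det_2x2[OF M] det_2x2[OF A]
      using A by (simp add: char_matrix_def algebra_simps)
  qed
  then show ?thesis using poly_eq_poly_eq_iff by blast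
qed

lemma char_poly_zero_mat: "char_poly (0\<^sub>m n n :: 'a :: field mat) = [:0, 1:] ^ n"
proof -
  have "map (\<lambda>a. [:- a, 1:]) (diag_mat (0\<^sub>m n n :: 'a mat)) = replicate n [:0, 1:]"
    by (rule nth_equalityI) (auto simp: diag_mat_def)
  then show ?thesis
    by (subst char_poly_upper_triangular[of _ n]) (auto simp: upper_triangular_def)
qed

text \<open>Sylvester's identity: \<open>[[A B, 0], [B, 0]]\<close> is conjugate to \<open>[[0, 0], [B, B A]]\<close>
  by \<open>[[1, A], [0, 1]]\<close>.\<close>
lemma char_poly_mult_commute:
  fixes A B :: "complex mat"
  assumes A: "A \<in> carrier_mat n m" and B: "B \<in> carrier_mat m n"
  shows "[:0, 1:] ^ m * char_poly (A * B) = [:0, 1:] ^ n * char_poly (B * A)"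
proof -
  have mA: "- A \<in> carrier_mat n m" using A by (rule uminus_carrier_mat)
  have AB: "A * B \<in> carrier_mat n n" and BA: "B * A \<in> carrier_mat m m" using A B by auto
  let ?M = "four_block_mat (A * B) (0\<^sub>m n m) B (0\<^sub>m m m)"
  let ?N = "four_block_mat (0\<^sub>m n n) (0\<^sub>m n m) B (B * A)"
  let ?P = "four_block_mat (1\<^sub>m n) A (0\<^sub>m m n) (1\<^sub>m m)"
  let ?Q = "four_block_mat (1\<^sub>m n) (- A) (0\<^sub>m m n) (1\<^sub>m m)"
  note P = one_carrier_mat A zero_carrier_mat one_carrier_mat
  note Q = one_carrier_mat mA zero_carrier_mat one_carrier_mat
  have cancel: "- 0\<^sub>m m m + 1\<^sub>m m = (1\<^sub>m m :: complex mat)" "A + - A = 0\<^sub>m n m"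
    using A by (auto intro!: eq_matI)
  have PQ: "?P * ?Q = 1\<^sub>m (n + m)"
    using A cancel by (simp add: mult_four_block_mat[OF P Q])
  have QP: "?Q * ?P = 1\<^sub>m (n + m)"
    using A cancel by (simp add: mult_four_block_mat[OF Q P])
  have "?P * ?N = four_block_mat (A * B) (A * (B * A)) B (B * A)"
    using A B by (simp add: mult_four_block_mat[OF P zero_carrier_mat zero_carrier_mat B BA])
  also have "\<dots> * ?Q = ?M"
  proof -
    have ABA: "A * (B * A) \<in> carrier_mat n m" using A BA by simp
    show ?thesis
      using A B AB BA
      by (simp add: mult_four_block_mat[OF AB ABA B BA Q] uminus_l_inv_mat[OF ABA] uminus_l_inv_mat[OF BA])
  qed
  finally have "?M = ?P * ?N * ?Q" by (rule sym)
  moreover have "{?M, ?N, ?P, ?Q} \<subseteq> carrier_mat (n + m) (n + m)"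
    using AB BA mA by (auto intro!: four_block_carrier_mat)
  ultimately have "similar_mat ?M ?N"
    using PQ QP by (intro similar_matI[where n = "n + m"])
  then have "char_poly ?M = char_poly ?N" by (rule char_poly_similar)
  moreover have "char_poly ?M = char_poly (A * B) * [:0, 1:] ^ m"
    using A B char_poly_factorized[of "A * B" n] char_poly_factorized[of "0\<^sub>m m m" m]
    by (subst char_poly_0_block'[OF refl]) (auto simp: char_poly_zero_mat)
  moreover have "char_poly ?N = [:0, 1:] ^ n * char_poly (B * A)"
    using A B char_poly_factorized[of "B * A" m] char_poly_factorized[of "0\<^sub>m n n" n]
    by (subst char_poly_0_block'[OF refl]) (auto simp: char_poly_zero_mat)
  ultimately show ?thesis by (metis mult.commute)
qed

lemma char_poly_mult_4x2_2x4:
  fixes A B :: "complex mat"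
  assumes A: "A \<in> carrier_mat 4 2" and B: "B \<in> carrier_mat 2 4"
  shows "char_poly (A * B) = [:0, 0, det (B * A), - ((B * A) $$ (0,0) + (B * A) $$ (1,1)), 1:]"
proof -
  have nz: "[:0, 1:] ^ 2 \<noteq> (0 :: complex poly)" by simp
  have "[:0, 1:] ^ 2 * char_poly (A * B) = [:0, 1:] ^ 2 * ([:0, 1:] ^ 2 * char_poly (B * A))"
    using char_poly_mult_commute[OF A B] by (simp add: mult.assoc[symmetric] flip: power_add)
  then have "char_poly (A * B) = [:0, 1:] ^ 2 * char_poly (B * A)"
    using mult_left_cancel[OF nz] by blast
  also have "\<dots> = [:0, 0, det (B * A), - ((B * A) $$ (0,0) + (B * A) $$ (1,1)), 1:]"
    using A B by (simp add: char_poly_2x2[of "B * A"] power2_eq_square)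
  finally show ?thesis .
qed

section \<open>Concurrence of a rank-two two-qubit state\<close>

text \<open>\<open>rank2_mat f\<close> is \<open>|f 0\<rangle>\<langle>f 0| + |f 1\<rangle>\<langle>f 1|\<close>; the reduction of a pure three-qubit state
  to two qubits has this form, \<open>f c\<close> being the component where the third qubit is in state \<open>c\<close>.\<close>
definition rank2_mat :: "(nat \<Rightarrow> nat \<Rightarrow> complex) \<Rightarrow> complex mat" where
  "rank2_mat f = mat 4 4 (\<lambda>(i,j). f 0 i * cnj (f 0 j) + f 1 i * cnj (f 1 j))"

text \<open>The bilinear form \<open>(f c)\<^sup>T (\<sigma>\<^sub>y \<otimes> \<sigma>\<^sub>y) (f d)\<close> and the vector \<open>(\<sigma>\<^sub>y \<otimes> \<sigma>\<^sub>y) (f d)\<close>.\<close>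
definition flip_form :: "(nat \<Rightarrow> nat \<Rightarrow> complex) \<Rightarrow> nat \<Rightarrow> nat \<Rightarrow> complex" where
  "flip_form f c d = - f c 0 * f d 3 + f c 1 * f d 2 + f c 2 * f d 1 - f c 3 * f d 0"

definition flip_vec :: "(nat \<Rightarrow> nat \<Rightarrow> complex) \<Rightarrow> nat \<Rightarrow> nat \<Rightarrow> complex" where
  "flip_vec f d j = (if j = 0 then - f d 3 else if j = 1 then f d 2 else if j = 2 then f d 1 else - f d 0)"

definition flip_det :: "(nat \<Rightarrow> nat \<Rightarrow> complex) \<Rightarrow> complex" where
  "flip_det f = flip_form f 0 0 * flip_form f 1 1 - flip_form f 0 1 * flip_form f 1 0"

text \<open>For Hermitian \<open>g\<close> this is the purity \<open>tr g\<^sup>2\<close>.\<close>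
definition frob_norm2 :: "nat \<Rightarrow> (nat \<Rightarrow> nat \<Rightarrow> complex) \<Rightarrow> real" where
  "frob_norm2 n g = (\<Sum>i<n. \<Sum>j<n. (cmod (g i j))\<^sup>2)"

definition vecs_mat :: "(nat \<Rightarrow> nat \<Rightarrow> complex) \<Rightarrow> complex mat" where
  "vecs_mat f = mat 4 2 (\<lambda>(i,c). f c i)"

definition flip_mat :: "(nat \<Rightarrow> nat \<Rightarrow> complex) \<Rightarrow> complex mat" where
  "flip_mat f = mat 2 4 (\<lambda>(c,j). cnj (flip_form f c 0) * flip_vec f 0 j + cnj (flip_form f c 1) * flip_vec f 1 j)"

lemma kron_pauli_y_y:
  "kron (pauli 2) (pauli 2) = mat 4 4 (\<lambda>(i,j). if i + j = 3 then (if i = 0 \<or> i = 3 then -1 else 1) else 0)"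
  by (rule eq_matI) (auto simp: kron_def pauli_def, auto simp: less_Suc_eq numeral_eq_Suc)

lemma flip_form_sym: "flip_form f c d = flip_form f d c"
  unfolding flip_form_def by (simp add: algebra_simps)

lemma sum_flip_vec: "(\<Sum>j<4. flip_vec f d j * f e j) = flip_form f d e"
  by (simp add: sum_lessThan_4 flip_vec_def flip_form_def algebra_simps)

lemma wootters_R_rank2_mat: "wootters_R (rank2_mat f) = vecs_mat f * flip_mat f"
  unfolding wootters_R_def kron_pauli_y_y
  by (rule eq_matI)
    (simp_all add: rank2_mat_def vecs_mat_def flip_mat_def mconj_def scalar_prod_def
      atLeast0LessThan sum_lessThan_2 sum_lessThan_4,
     auto simp: less_Suc_eq numeral_eq_Suc flip_vec_def flip_form_def algebra_simps)

lemma flip_mat_mult_vecs_mat_index: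
  assumes "c < 2" "e < 2"
  shows "(flip_mat f * vecs_mat f) $$ (c,e)
    = cnj (flip_form f c 0) * flip_form f 0 e + cnj (flip_form f c 1) * flip_form f 1 e"
proof -
  have "(flip_mat f * vecs_mat f) $$ (c,e)
      = (\<Sum>j<4. (cnj (flip_form f c 0) * flip_vec f 0 j + cnj (flip_form f c 1) * flip_vec f 1 j) * f e j)"
    using assms by (simp add: flip_mat_def vecs_mat_def scalar_prod_def atLeast0LessThan)
  also have "\<dots> = cnj (flip_form f c 0) * (\<Sum>j<4. flip_vec f 0 j * f e j)
      + cnj (flip_form f c 1) * (\<Sum>j<4. flip_vec f 1 j * f e j)"
    by (simp add: sum.distrib sum_distrib_left distrib_right mult.assoc)
  finally show ?thesis by (simp add: sum_flip_vec)
qed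

lemma char_poly_wootters_R_rank2_mat:
  "char_poly (wootters_R (rank2_mat f))
    = [:0, 0, of_real ((cmod (flip_det f))\<^sup>2), - of_real (frob_norm2 2 (flip_form f)), 1:]"
proof -
  have A: "vecs_mat f \<in> carrier_mat 4 2" by (simp add: vecs_mat_def)
  have B: "flip_mat f \<in> carrier_mat 2 4" by (simp add: flip_mat_def)
  have BA: "flip_mat f * vecs_mat f \<in> carrier_mat 2 2" using A B by simp
  have s: "flip_form f 1 0 = flip_form f 0 1" "flip_form f (Suc 0) 0 = flip_form f 0 (Suc 0)"
    by (rule flip_form_sym)+
  have "det (flip_mat f * vecs_mat f) = of_real ((cmod (flip_det f))\<^sup>2)"
    unfolding det_2x2[OF BA] cmod_power2_eq_mult_cnj
    by (simp add: flip_mat_mult_vecs_mat_index flip_det_def s algebra_simps)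
  moreover have "(flip_mat f * vecs_mat f) $$ (0,0) + (flip_mat f * vecs_mat f) $$ (1,1)
      = of_real (frob_norm2 2 (flip_form f))"
    unfolding frob_norm2_def sum_lessThan_2 of_real_add cmod_power2_eq_mult_cnj
    by (simp add: flip_mat_mult_vecs_mat_index s algebra_simps)
  ultimately show ?thesis
    unfolding wootters_R_rank2_mat char_poly_mult_4x2_2x4[OF A B] by simp
qed

lemma flip_det_le_frob_norm2: "2 * cmod (flip_det f) \<le> frob_norm2 2 (flip_form f)"
proof -
  let ?a = "cmod (flip_form f 0 0)" and ?b = "cmod (flip_form f 1 1)" and ?c = "cmod (flip_form f 0 1)"
  have "cmod (flip_det f) \<le> ?a * ?b + ?c\<^sup>2"
    using norm_triangle_ineq4[of "flip_form f 0 0 * flip_form f 1 1" "flip_form f 0 1 * flip_form f 0 1"]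
    unfolding flip_det_def flip_form_sym[of f 1 0] by (simp add: norm_mult power2_eq_square)
  moreover have "2 * (?a * ?b) \<le> ?a\<^sup>2 + ?b\<^sup>2"
    using sum_squares_bound[of ?a ?b] by simp
  moreover have "frob_norm2 2 (flip_form f) = ?a\<^sup>2 + ?b\<^sup>2 + 2 * ?c\<^sup>2"
    unfolding frob_norm2_def sum_lessThan_2 flip_form_sym[of f 1 0] by simp
  ultimately show ?thesis by linarith
qed

lemma proots_monomial_linear_factors:
  "proots ([:0, 1:] * [:0, 1:] * [:- a, 1:] * [:- b, 1:]) = {#0, 0, a, b#}"
  for a b :: complex
proof -
  have n1: "[:0, 1:] \<noteq> (0::complex poly)" "[:- a, 1:] \<noteq> 0" "[:- b, 1:] \<noteq> 0" by simp_all
  have n2: "[:0, 1:] * [:0, 1:] \<noteq> (0::complex poly)"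
    by (simp only: mult_eq_0_iff n1 de_Morgan_disj simp_thms)
  have n3: "[:0, 1:] * [:0, 1:] * [:- a, 1:] \<noteq> (0::complex poly)"
    by (simp only: mult_eq_0_iff n1 de_Morgan_disj simp_thms)
  show ?thesis
    by (simp only: proots_mult n1 n2 n3 proots_linear_factor minus_minus simp_thms)
      (simp add: add_mset_commute)
qed

text \<open>The nonzero eigenvalues \<open>r\<^sub>1 \<ge> r\<^sub>2\<close> of the Wootters matrix have sum \<open>\<parallel>T\<parallel>\<^sup>2\<close> and
  product \<open>|det T|\<^sup>2\<close>, so \<open>(\<surd>r\<^sub>1 - \<surd>r\<^sub>2)\<^sup>2 = \<parallel>T\<parallel>\<^sup>2 - 2 |det T|\<close>.\<close>
lemma concurrence_rank2_mat:
  "(concurrence (rank2_mat f))\<^sup>2 = frob_norm2 2 (flip_form f) - 2 * cmod (flip_det f)"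
proof -
  define t where "t = frob_norm2 2 (flip_form f)"
  define d where "d = (cmod (flip_det f))\<^sup>2"
  define s where "s = sqrt (t\<^sup>2 - 4 * d)"
  define r1 where "r1 = (t + s) / 2"
  define r2 where "r2 = (t - s) / 2"
  have t0: "2 * cmod (flip_det f) \<le> t" unfolding t_def by (rule flip_det_le_frob_norm2)
  have "(2 * cmod (flip_det f))\<^sup>2 \<le> t\<^sup>2" by (rule power_mono[OF t0]) simp
  then have "4 * d \<le> t\<^sup>2" unfolding d_def by (simp add: power_mult_distrib)
  then have s0: "0 \<le> s" and ss: "s\<^sup>2 = t\<^sup>2 - 4 * d" unfolding s_def by auto
  have "s \<le> sqrt (t\<^sup>2)" unfolding s_def d_def by (rule real_sqrt_le_mono) simp
  moreover have "0 \<le> t" using t0 norm_ge_zero[of "flip_det f"] by linarith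
  ultimately have "s \<le> t" by simp
  then have r2: "0 \<le> r2" and r12: "r2 \<le> r1" unfolding r1_def r2_def using s0 by auto
  have sum: "r1 + r2 = t" and prod: "r1 * r2 = d"
    unfolding r1_def r2_def using ss by (auto simp: field_simps power2_eq_square)
  have "[:0, 0, of_real d, - of_real t, 1:]
      = [:0, 1:] * [:0, 1:] * [:- complex_of_real r1, 1:] * [:- complex_of_real r2, 1:]"
  proof -
    have "poly [:0, 0, of_real d, - of_real t, 1:] x
        = poly ([:0, 1:] * [:0, 1:] * [:- complex_of_real r1, 1:] * [:- complex_of_real r2, 1:]) x"
      for x :: complex
      unfolding sum[symmetric] prod[symmetric] by (simp add: algebra_simps)
    then show ?thesis using poly_eq_poly_eq_iff by blast
  qed
  then have "proots (char_poly (wootters_R (rank2_mat f))) = {#0, 0, of_real r1, of_real r2#}"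
    unfolding char_poly_wootters_R_rank2_mat d_def[symmetric] t_def[symmetric]
    by (simp only: proots_monomial_linear_factors)
  moreover have "image_mset (\<lambda>\<mu>. sqrt (Re \<mu>)) {#0, 0, complex_of_real r1, complex_of_real r2#}
      = mset [0, 0, sqrt r2, sqrt r1]"
    by (simp add: add_mset_commute)
  moreover have "sorted [0, 0, sqrt r2, sqrt r1]" using r2 r12 by simp
  ultimately have "wootters_lambdas (rank2_mat f) = [sqrt r1, sqrt r2, 0, 0]"
    unfolding wootters_lambdas_def by (simp add: sorted_sort_id)
  then have "concurrence (rank2_mat f) = sqrt r1 - sqrt r2"
    unfolding concurrence_def using r12 by simp
  moreover have "(sqrt r1 - sqrt r2)\<^sup>2 = r1 + r2 - 2 * sqrt (r1 * r2)"
    using r2 r12 by (simp add: power2_diff real_sqrt_mult)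
  ultimately show ?thesis unfolding sum prod d_def t_def by simp
qed

section \<open>The correlation sum of a Hermitian two-qubit matrix\<close>

definition ptrace_snd :: "complex mat \<Rightarrow> nat \<Rightarrow> nat \<Rightarrow> complex" where
  "ptrace_snd M a a' = M $$ (2*a, 2*a') + M $$ (2*a+1, 2*a'+1)"

definition ptrace_fst :: "complex mat \<Rightarrow> nat \<Rightarrow> nat \<Rightarrow> complex" where
  "ptrace_fst M b b' = M $$ (b, b') + M $$ (b+2, b'+2)"

lemma frob_norm2_cong:
  "n = n' \<Longrightarrow> (\<And>i j. i < n' \<Longrightarrow> j < n' \<Longrightarrow> g i j = h i j) \<Longrightarrow> frob_norm2 n g = frob_norm2 n' h"
  unfolding frob_norm2_def by simp

lemma cmod_power2_Re_Im: "(cmod z)\<^sup>2 = (Re z)\<^sup>2 + (Im z)\<^sup>2"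
  by (simp add: cmod_power2)

lemma pauli_index: "pauli k $$ (i,j) = (if i < 2 \<and> j < 2 then
     (if k = 1 then (if i \<noteq> j then 1 else 0)
     else if k = 2 then (if i = 0 \<and> j = 1 then - \<i> else if i = 1 \<and> j = 0 then \<i> else 0)
     else if k = 3 then (if i = j then (if i = 0 then 1 else -1) else 0)
     else (if i = j then 1 else 0)) else pauli k $$ (i,j))"
  by (simp add: pauli_def)

lemma pauli_carrier: "pauli k \<in> carrier_mat 2 2"
  by (simp add: pauli_def)

lemma tcorr_eq_sum:
  assumes M: "M \<in> carrier_mat 4 4"
  shows "tcorr M k l
    = (\<Sum>i<4. \<Sum>j<4. M $$ (i,j) * (pauli k $$ (j div 2, i div 2) * pauli l $$ (j mod 2, i mod 2)))"
proof -
  have K: "kron (pauli k) (pauli l) \<in> carrier_mat 4 4"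
    using pauli_carrier[of k] pauli_carrier[of l] by (simp add: kron_def)
  have Kij: "kron (pauli k) (pauli l) $$ (j,i) = pauli k $$ (j div 2, i div 2) * pauli l $$ (j mod 2, i mod 2)"
    if "i < 4" "j < 4" for i j
    using that pauli_carrier[of k] pauli_carrier[of l] by (simp add: kron_def)
  have "tcorr M k l = (\<Sum>i<4. (M * kron (pauli k) (pauli l)) $$ (i,i))"
    using M by (simp add: tcorr_def mtrace_def)
  also have "\<dots> = (\<Sum>i<4. \<Sum>j<4. M $$ (i,j) * kron (pauli k) (pauli l) $$ (j,i))"
    using M K by (intro sum.cong refl) (simp add: scalar_prod_def atLeast0LessThan)
  finally show ?thesis by (simp add: Kij)
qed

lemma tcorr_4x4:
  assumes M: "M \<in> carrier_mat 4 4"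
  shows "tcorr M 1 1 = M$$(0,3) + M$$(1,2) + M$$(2,1) + M$$(3,0)"
    and "tcorr M 1 2 = \<i> * M$$(0,3) - \<i> * M$$(1,2) + \<i> * M$$(2,1) - \<i> * M$$(3,0)"
    and "tcorr M 1 3 = M$$(0,2) - M$$(1,3) + M$$(2,0) - M$$(3,1)"
    and "tcorr M 2 1 = \<i> * M$$(0,3) + \<i> * M$$(1,2) - \<i> * M$$(2,1) - \<i> * M$$(3,0)"
    and "tcorr M 2 2 = - M$$(0,3) + M$$(1,2) + M$$(2,1) - M$$(3,0)"
    and "tcorr M 2 3 = \<i> * M$$(0,2) - \<i> * M$$(1,3) - \<i> * M$$(2,0) + \<i> * M$$(3,1)"
    and "tcorr M 3 1 = M$$(0,1) + M$$(1,0) - M$$(2,3) - M$$(3,2)"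
    and "tcorr M 3 2 = \<i> * M$$(0,1) - \<i> * M$$(1,0) - \<i> * M$$(2,3) + \<i> * M$$(3,2)"
    and "tcorr M 3 3 = M$$(0,0) - M$$(1,1) - M$$(2,2) + M$$(3,3)"
  by (simp_all only: tcorr_eq_sum[OF M] sum_lessThan_4) (simp_all add: pauli_index)

lemma Scorr_hermitian_4x4:
  assumes M: "M \<in> carrier_mat 4 4"
    and herm: "\<And>i j. i < 4 \<Longrightarrow> j < 4 \<Longrightarrow> M $$ (j,i) = cnj (M $$ (i,j))"
  shows "Scorr M = 4 * frob_norm2 4 (\<lambda>i j. M $$ (i,j)) + (Re (mtrace M))\<^sup>2
    - 2 * frob_norm2 2 (ptrace_snd M) - 2 * frob_norm2 2 (ptrace_fst M)"
proof -
  have h: "M$$(1,0) = cnj (M$$(0,1))" "M$$(2,0) = cnj (M$$(0,2))" "M$$(3,0) = cnj (M$$(0,3))"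
     "M$$(2,1) = cnj (M$$(1,2))" "M$$(3,1) = cnj (M$$(1,3))" "M$$(3,2) = cnj (M$$(2,3))"
    by (rule herm; simp)+
  have "Im (M$$(i,i)) = 0" if "i < 4" for i
    using herm[OF that that] by (metis cnj.simps(2) neg_equal_zero)
  then have d: "Im (M$$(0,0)) = 0" "Im (M$$(1,1)) = 0" "Im (M$$(2,2)) = 0" "Im (M$$(3,3)) = 0"
    by auto
  have p: "ptrace_snd M 0 0 = M$$(0,0) + M$$(1,1)" "ptrace_snd M 0 1 = M$$(0,2) + M$$(1,3)"
     "ptrace_snd M 1 0 = M$$(2,0) + M$$(3,1)" "ptrace_snd M 1 1 = M$$(2,2) + M$$(3,3)"
     "ptrace_fst M 0 0 = M$$(0,0) + M$$(2,2)" "ptrace_fst M 0 1 = M$$(0,1) + M$$(2,3)"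
     "ptrace_fst M 1 0 = M$$(1,0) + M$$(3,2)" "ptrace_fst M 1 1 = M$$(1,1) + M$$(3,3)"
    by (simp_all add: ptrace_fst_def ptrace_snd_def eval_nat_numeral)
  have tr: "mtrace M = M$$(0,0) + M$$(1,1) + M$$(2,2) + M$$(3,3)"
    using M by (simp add: mtrace_def sum_lessThan_4)
  have "{1..3::nat} = {1,2,3}" by auto
  then have "Scorr M = (Re (tcorr M 1 1))\<^sup>2 + (Re (tcorr M 1 2))\<^sup>2 + (Re (tcorr M 1 3))\<^sup>2
      + (Re (tcorr M 2 1))\<^sup>2 + (Re (tcorr M 2 2))\<^sup>2 + (Re (tcorr M 2 3))\<^sup>2
      + (Re (tcorr M 3 1))\<^sup>2 + (Re (tcorr M 3 2))\<^sup>2 + (Re (tcorr M 3 3))\<^sup>2"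
    unfolding Scorr_def by (simp add: algebra_simps)
  also have "\<dots> = 4 * frob_norm2 4 (\<lambda>i j. M $$ (i,j)) + (Re (mtrace M))\<^sup>2
      - 2 * frob_norm2 2 (ptrace_snd M) - 2 * frob_norm2 2 (ptrace_fst M)"
    unfolding tcorr_4x4[OF M] frob_norm2_def tr p sum_lessThan_4 sum_lessThan_2 h
      cmod_power2_Re_Im
    by (simp add: d power2_eq_square algebra_simps)
  finally show ?thesis .
qed

lemma bloch_norm2_2x2:
  assumes R: "R \<in> carrier_mat 2 2"
    and h: "R $$ (1,0) = cnj (R $$ (0,1))" and d: "Im (R $$ (0,0)) = 0" "Im (R $$ (1,1)) = 0"
  shows "(\<Sum>k\<in>{1..3}. (Re (mtrace (R * pauli k)))\<^sup>2)
    = 2 * frob_norm2 2 (\<lambda>a b. R $$ (a,b)) - (Re (R $$ (0,0) + R $$ (1,1)))\<^sup>2"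
proof -
  have tr: "mtrace (R * pauli k) = (\<Sum>i<2. \<Sum>j<2. R $$ (i,j) * pauli k $$ (j,i))" for k
    using R by (simp add: mtrace_def pauli_def scalar_prod_def atLeast0LessThan)
  have t: "mtrace (R * pauli 1) = R$$(0,1) + R$$(1,0)"
          "mtrace (R * pauli 2) = \<i> * R$$(0,1) - \<i> * R$$(1,0)"
          "mtrace (R * pauli 3) = R$$(0,0) - R$$(1,1)"
    unfolding tr by (simp_all add: sum_lessThan_2 pauli_index)
  have "{1..3::nat} = {1,2,3}" by auto
  then have "(\<Sum>k\<in>{1..3}. (Re (mtrace (R * pauli k)))\<^sup>2)
      = (Re (mtrace (R * pauli 1)))\<^sup>2 + (Re (mtrace (R * pauli 2)))\<^sup>2 + (Re (mtrace (R * pauli 3)))\<^sup>2"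
    by (simp add: algebra_simps)
  also have "\<dots> = 2 * frob_norm2 2 (\<lambda>a b. R $$ (a,b)) - (Re (R $$ (0,0) + R $$ (1,1)))\<^sup>2"
    unfolding t frob_norm2_def sum_lessThan_2 h cmod_power2_Re_Im
    using d by (simp add: power2_eq_square algebra_simps)
  finally show ?thesis .
qed

lemma trace_square_le_frob_norm2: "(Re (g 0 0 + g 1 1))\<^sup>2 \<le> 2 * frob_norm2 2 g"
proof -
  have "(Re (g 0 0))\<^sup>2 \<le> (cmod (g 0 0))\<^sup>2" "(Re (g 1 1))\<^sup>2 \<le> (cmod (g 1 1))\<^sup>2"
    by (simp_all add: cmod_power2)
  moreover have "(Re (g 0 0) + Re (g 1 1))\<^sup>2 \<le> 2 * ((Re (g 0 0))\<^sup>2 + (Re (g 1 1))\<^sup>2)"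
    by (smt (verit) sum_squares_bound power2_sum)
  moreover have "0 \<le> (cmod (g 0 1))\<^sup>2" "0 \<le> (cmod (g 1 0))\<^sup>2" by simp_all
  ultimately show ?thesis unfolding frob_norm2_def sum_lessThan_2 plus_complex.sel by (smt (verit))
qed

section \<open>Pure three-qubit states\<close>

text \<open>\<open>slice_XY \<psi> z\<close> is the two-qubit component of \<open>\<psi>\<close> on which the remaining qubit is in state \<open>z\<close>.\<close>
definition slice_AB :: "complex vec \<Rightarrow> nat \<Rightarrow> nat \<Rightarrow> complex" where
  "slice_AB \<psi> c i = \<psi> $ (2*i + c)"

definition slice_AC :: "complex vec \<Rightarrow> nat \<Rightarrow> nat \<Rightarrow> complex" where
  "slice_AC \<psi> b i = \<psi> $ (4*(i div 2) + 2*b + i mod 2)"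

definition slice_BC :: "complex vec \<Rightarrow> nat \<Rightarrow> nat \<Rightarrow> complex" where
  "slice_BC \<psi> a i = \<psi> $ (4*a + i)"

definition rdm_A :: "complex vec \<Rightarrow> nat \<Rightarrow> nat \<Rightarrow> complex" where
  "rdm_A \<psi> a a' = (\<Sum>m<4. \<psi> $ (4*a + m) * cnj (\<psi> $ (4*a' + m)))"

definition rdm_B :: "complex vec \<Rightarrow> nat \<Rightarrow> nat \<Rightarrow> complex" where
  "rdm_B \<psi> b b' = (\<Sum>a<2. \<Sum>c<2. \<psi> $ (4*a + 2*b + c) * cnj (\<psi> $ (4*a + 2*b' + c)))"

definition rdm_C :: "complex vec \<Rightarrow> nat \<Rightarrow> nat \<Rightarrow> complex" where
  "rdm_C \<psi> c c' = (\<Sum>a<2. \<Sum>b<2. \<psi> $ (4*a + 2*b + c) * cnj (\<psi> $ (4*a + 2*b + c')))"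

definition vec_norm2 :: "complex vec \<Rightarrow> real" where
  "vec_norm2 \<psi> = (\<Sum>i<8. (cmod (\<psi> $ i))\<^sup>2)"

lemma proj_index:
  "\<psi> \<in> carrier_vec 8 \<Longrightarrow> i < 8 \<Longrightarrow> j < 8 \<Longrightarrow> proj \<psi> $$ (i,j) = \<psi> $ i * cnj (\<psi> $ j)"
  by (simp add: proj_def)

lemma red_AB_proj: "\<psi> \<in> carrier_vec 8 \<Longrightarrow> red_AB (proj \<psi>) = rank2_mat (slice_AB \<psi>)"
  by (rule eq_matI) (auto simp: red_AB_def rank2_mat_def slice_AB_def proj_index sum_lessThan_2)

lemma red_AC_proj:
  assumes "\<psi> \<in> carrier_vec 8"
  shows "red_AC (proj \<psi>) = rank2_mat (slice_AC \<psi>)"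
proof -
  have less4: "(i::nat) < 4 \<longleftrightarrow> i = 0 \<or> i = 1 \<or> i = 2 \<or> i = 3" for i by auto
  show ?thesis
    by (rule eq_matI)
      (use assms in \<open>auto simp: red_AC_def rank2_mat_def slice_AC_def proj_index sum_lessThan_2 less4\<close>)
qed

lemma red_BC_proj: "\<psi> \<in> carrier_vec 8 \<Longrightarrow> red_BC (proj \<psi>) = rank2_mat (slice_BC \<psi>)"
  by (rule eq_matI) (auto simp: red_BC_def rank2_mat_def slice_BC_def proj_index sum_lessThan_2)

lemma red_A_proj_index:
  "\<psi> \<in> carrier_vec 8 \<Longrightarrow> a < 2 \<Longrightarrow> b < 2 \<Longrightarrow> red_A (proj \<psi>) $$ (a,b) = rdm_A \<psi> a b"
  by (auto simp: red_A_def rdm_A_def proj_index)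

lemma flip_det_slice_AB: "flip_det (slice_AB \<psi>) = flip_det (slice_BC \<psi>)"
  unfolding flip_det_def flip_form_def slice_AB_def slice_BC_def
  by (simp add: numeral_eq_Suc algebra_simps)

lemma flip_det_slice_AC: "flip_det (slice_AC \<psi>) = flip_det (slice_BC \<psi>)"
  unfolding flip_det_def flip_form_def slice_AC_def slice_BC_def
  by (simp, simp add: numeral_eq_Suc algebra_simps)

text \<open>The Coffman--Kundu--Wootters identities: for a unit vector the left-hand side is
  \<open>4 det \<rho>\<^sub>A = 2 - 2 tr \<rho>\<^sub>A\<^sup>2\<close>.\<close>
lemma frob_flip_slice_AB_AC:
  "frob_norm2 2 (flip_form (slice_AB \<psi>)) + frob_norm2 2 (flip_form (slice_AC \<psi>))
    = 2 * (vec_norm2 \<psi>)\<^sup>2 - 2 * frob_norm2 2 (rdm_A \<psi>)"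
  by (rule of_real_eq_iff[where 'a=complex, THEN iffD1])
    (simp only: frob_norm2_def vec_norm2_def of_real_add of_real_mult of_real_diff
       of_real_numeral of_real_sum cmod_power2_eq_mult_cnj,
     simp only: of_real_power,
     simp only: of_real_sum cmod_power2_eq_mult_cnj,
     simp add: sum_lessThan_8 sum_lessThan_4 sum_lessThan_2 rdm_A_def flip_form_def
       slice_AB_def slice_AC_def,
     simp add: numeral_eq_Suc algebra_simps)

lemma frob_flip_slice_AB_BC:
  "frob_norm2 2 (flip_form (slice_AB \<psi>)) + frob_norm2 2 (flip_form (slice_BC \<psi>))
    = 2 * (vec_norm2 \<psi>)\<^sup>2 - 2 * frob_norm2 2 (rdm_B \<psi>)"
  by (rule of_real_eq_iff[where 'a=complex, THEN iffD1])
    (simp only: frob_norm2_def vec_norm2_def of_real_add of_real_mult of_real_diff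
       of_real_numeral of_real_sum cmod_power2_eq_mult_cnj,
     simp only: of_real_power,
     simp only: of_real_sum cmod_power2_eq_mult_cnj,
     simp add: sum_lessThan_8 sum_lessThan_4 sum_lessThan_2 rdm_B_def flip_form_def
       slice_AB_def slice_BC_def,
     simp add: numeral_eq_Suc algebra_simps)

lemma frob_flip_slice_AC_BC:
  "frob_norm2 2 (flip_form (slice_AC \<psi>)) + frob_norm2 2 (flip_form (slice_BC \<psi>))
    = 2 * (vec_norm2 \<psi>)\<^sup>2 - 2 * frob_norm2 2 (rdm_C \<psi>)"
  by (rule of_real_eq_iff[where 'a=complex, THEN iffD1])
    (simp only: frob_norm2_def vec_norm2_def of_real_add of_real_mult of_real_diff
       of_real_numeral of_real_sum cmod_power2_eq_mult_cnj,
     simp only: of_real_power,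
     simp only: of_real_sum cmod_power2_eq_mult_cnj,
     simp add: sum_lessThan_8 sum_lessThan_4 sum_lessThan_2 rdm_C_def flip_form_def
       slice_AC_def slice_BC_def,
     simp add: numeral_eq_Suc algebra_simps)

lemma frob_rank2_slice_AB: "frob_norm2 4 (\<lambda>i j. rank2_mat (slice_AB \<psi>) $$ (i,j)) = frob_norm2 2 (rdm_C \<psi>)"
  by (rule of_real_eq_iff[where 'a=complex, THEN iffD1])
    (simp only: frob_norm2_def of_real_add of_real_sum cmod_power2_eq_mult_cnj,
     simp add: sum_lessThan_4 sum_lessThan_2 rank2_mat_def rdm_C_def slice_AB_def,
     simp add: numeral_eq_Suc algebra_simps)

lemma frob_rank2_slice_AC: "frob_norm2 4 (\<lambda>i j. rank2_mat (slice_AC \<psi>) $$ (i,j)) = frob_norm2 2 (rdm_B \<psi>)"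
  by (rule of_real_eq_iff[where 'a=complex, THEN iffD1])
    (simp only: frob_norm2_def of_real_add of_real_sum cmod_power2_eq_mult_cnj,
     simp add: sum_lessThan_4 sum_lessThan_2 rank2_mat_def rdm_B_def slice_AC_def,
     simp add: numeral_eq_Suc algebra_simps)

lemma frob_rank2_slice_BC: "frob_norm2 4 (\<lambda>i j. rank2_mat (slice_BC \<psi>) $$ (i,j)) = frob_norm2 2 (rdm_A \<psi>)"
  by (rule of_real_eq_iff[where 'a=complex, THEN iffD1])
    (simp only: frob_norm2_def of_real_add of_real_sum cmod_power2_eq_mult_cnj,
     simp add: sum_lessThan_4 sum_lessThan_2 rank2_mat_def rdm_A_def slice_BC_def,
     simp add: numeral_eq_Suc algebra_simps)

lemma ptrace_rank2_slices:
  assumes "a < 2" "b < 2"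
  shows "ptrace_snd (rank2_mat (slice_AB \<psi>)) a b = rdm_A \<psi> a b"
    and "ptrace_fst (rank2_mat (slice_AB \<psi>)) a b = rdm_B \<psi> a b"
    and "ptrace_snd (rank2_mat (slice_AC \<psi>)) a b = rdm_A \<psi> a b"
    and "ptrace_fst (rank2_mat (slice_AC \<psi>)) a b = rdm_C \<psi> a b"
    and "ptrace_snd (rank2_mat (slice_BC \<psi>)) a b = rdm_B \<psi> a b"
    and "ptrace_fst (rank2_mat (slice_BC \<psi>)) a b = rdm_C \<psi> a b"
proof -
  have ab: "a = 0 \<or> a = 1" "b = 0 \<or> b = 1" using assms by auto
  show "ptrace_snd (rank2_mat (slice_AB \<psi>)) a b = rdm_A \<psi> a b"
    "ptrace_fst (rank2_mat (slice_AB \<psi>)) a b = rdm_B \<psi> a b"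
    "ptrace_snd (rank2_mat (slice_AC \<psi>)) a b = rdm_A \<psi> a b"
    "ptrace_fst (rank2_mat (slice_AC \<psi>)) a b = rdm_C \<psi> a b"
    "ptrace_snd (rank2_mat (slice_BC \<psi>)) a b = rdm_B \<psi> a b"
    "ptrace_fst (rank2_mat (slice_BC \<psi>)) a b = rdm_C \<psi> a b"
    using ab
    by (auto simp: ptrace_snd_def ptrace_fst_def rank2_mat_def slice_AB_def slice_AC_def
        slice_BC_def rdm_A_def rdm_B_def rdm_C_def sum_lessThan_2 sum_lessThan_4,
      (simp_all add: numeral_eq_Suc algebra_simps)?)
qed

lemma trace_rank2_slices:
  "mtrace (rank2_mat (slice_AB \<psi>)) = of_real (vec_norm2 \<psi>)"
  "mtrace (rank2_mat (slice_AC \<psi>)) = of_real (vec_norm2 \<psi>)"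
  "mtrace (rank2_mat (slice_BC \<psi>)) = of_real (vec_norm2 \<psi>)"
  unfolding vec_norm2_def of_real_sum cmod_power2_eq_mult_cnj
  by (simp_all add: mtrace_def sum_lessThan_8 sum_lessThan_4 rank2_mat_def slice_AB_def
      slice_AC_def slice_BC_def,
    (simp_all add: numeral_eq_Suc algebra_simps)?)

lemma trace_rdms:
  "rdm_A \<psi> 0 0 + rdm_A \<psi> 1 1 = of_real (vec_norm2 \<psi>)"
  "rdm_B \<psi> 0 0 + rdm_B \<psi> 1 1 = of_real (vec_norm2 \<psi>)"
  "rdm_C \<psi> 0 0 + rdm_C \<psi> 1 1 = of_real (vec_norm2 \<psi>)"
  unfolding vec_norm2_def of_real_sum cmod_power2_eq_mult_cnj
  by (simp_all add: sum_lessThan_8 sum_lessThan_4 sum_lessThan_2 rdm_A_def rdm_B_def rdm_C_def,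
    (simp_all add: numeral_eq_Suc algebra_simps)?)

lemma bloch_A_proj:
  assumes \<psi>: "\<psi> \<in> carrier_vec 8"
  shows "(\<Sum>k\<in>{1..3}. (bloch_A (proj \<psi>) k)\<^sup>2) = 2 * frob_norm2 2 (rdm_A \<psi>) - (vec_norm2 \<psi>)\<^sup>2"
proof -
  let ?R = "red_A (proj \<psi>)"
  have R: "?R \<in> carrier_mat 2 2" by (simp add: red_A_def)
  have e: "?R $$ (0,0) = rdm_A \<psi> 0 0" "?R $$ (0,1) = rdm_A \<psi> 0 1"
    "?R $$ (1,0) = rdm_A \<psi> 1 0" "?R $$ (1,1) = rdm_A \<psi> 1 1"
    using red_A_proj_index[OF \<psi>] by auto
  have "rdm_A \<psi> 1 0 = cnj (rdm_A \<psi> 0 1)" by (simp add: rdm_A_def cnj_sum mult.commute)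
  moreover have "Im (rdm_A \<psi> 0 0) = 0" "Im (rdm_A \<psi> 1 1) = 0" by (simp_all add: rdm_A_def Im_sum)
  ultimately have "(\<Sum>k\<in>{1..3}. (bloch_A (proj \<psi>) k)\<^sup>2)
      = 2 * frob_norm2 2 (\<lambda>a b. ?R $$ (a,b)) - (Re (?R $$ (0,0) + ?R $$ (1,1)))\<^sup>2"
    unfolding bloch_A_def by (intro bloch_norm2_2x2[OF R]) (simp_all only: e)
  also have "frob_norm2 2 (\<lambda>a b. ?R $$ (a,b)) = frob_norm2 2 (rdm_A \<psi>)"
    by (rule frob_norm2_cong) (simp_all add: red_A_proj_index[OF \<psi>])
  finally show ?thesis unfolding e trace_rdms by simp
qed

lemma tau_pure_eq:
  assumes u: "unit_vec8 \<psi>"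
  shows "tau_pure \<psi> = 4 * cmod (flip_det (slice_BC \<psi>))"
proof -
  have c: "\<psi> \<in> carrier_vec 8" and N: "vec_norm2 \<psi> = 1"
    using u unfolding unit_vec8_def vec_norm2_def by simp_all
  show ?thesis
    using frob_flip_slice_AB_AC[of \<psi>]
    unfolding tau_pure_def bloch_A_proj[OF c] red_AB_proj[OF c] red_AC_proj[OF c]
      concurrence_rank2_mat flip_det_slice_AB flip_det_slice_AC N
    by simp
qed

lemma Scorr_red_proj:
  assumes c: "\<psi> \<in> carrier_vec 8"
  shows "Scorr (red_AB (proj \<psi>)) = 4 * frob_norm2 2 (rdm_C \<psi>) + (vec_norm2 \<psi>)\<^sup>2
      - 2 * frob_norm2 2 (rdm_A \<psi>) - 2 * frob_norm2 2 (rdm_B \<psi>)"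
    and "Scorr (red_AC (proj \<psi>)) = 4 * frob_norm2 2 (rdm_B \<psi>) + (vec_norm2 \<psi>)\<^sup>2
      - 2 * frob_norm2 2 (rdm_A \<psi>) - 2 * frob_norm2 2 (rdm_C \<psi>)"
    and "Scorr (red_BC (proj \<psi>)) = 4 * frob_norm2 2 (rdm_A \<psi>) + (vec_norm2 \<psi>)\<^sup>2
      - 2 * frob_norm2 2 (rdm_B \<psi>) - 2 * frob_norm2 2 (rdm_C \<psi>)"
proof -
  have S: "Scorr (rank2_mat f) = 4 * frob_norm2 4 (\<lambda>i j. rank2_mat f $$ (i,j))
      + (Re (mtrace (rank2_mat f)))\<^sup>2
      - 2 * frob_norm2 2 (ptrace_snd (rank2_mat f)) - 2 * frob_norm2 2 (ptrace_fst (rank2_mat f))" for f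
    by (rule Scorr_hermitian_4x4) (simp_all add: rank2_mat_def)
  have P: "frob_norm2 2 (ptrace_snd (rank2_mat (slice_AB \<psi>))) = frob_norm2 2 (rdm_A \<psi>)"
    "frob_norm2 2 (ptrace_fst (rank2_mat (slice_AB \<psi>))) = frob_norm2 2 (rdm_B \<psi>)"
    "frob_norm2 2 (ptrace_snd (rank2_mat (slice_AC \<psi>))) = frob_norm2 2 (rdm_A \<psi>)"
    "frob_norm2 2 (ptrace_fst (rank2_mat (slice_AC \<psi>))) = frob_norm2 2 (rdm_C \<psi>)"
    "frob_norm2 2 (ptrace_snd (rank2_mat (slice_BC \<psi>))) = frob_norm2 2 (rdm_B \<psi>)"
    "frob_norm2 2 (ptrace_fst (rank2_mat (slice_BC \<psi>))) = frob_norm2 2 (rdm_C \<psi>)"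
    by (simp_all add: ptrace_rank2_slices cong: frob_norm2_cong)
  show "Scorr (red_AB (proj \<psi>)) = 4 * frob_norm2 2 (rdm_C \<psi>) + (vec_norm2 \<psi>)\<^sup>2
      - 2 * frob_norm2 2 (rdm_A \<psi>) - 2 * frob_norm2 2 (rdm_B \<psi>)"
    unfolding red_AB_proj[OF c] S P frob_rank2_slice_AB trace_rank2_slices by simp
  show "Scorr (red_AC (proj \<psi>)) = 4 * frob_norm2 2 (rdm_B \<psi>) + (vec_norm2 \<psi>)\<^sup>2
      - 2 * frob_norm2 2 (rdm_A \<psi>) - 2 * frob_norm2 2 (rdm_C \<psi>)"
    unfolding red_AC_proj[OF c] S P frob_rank2_slice_AC trace_rank2_slices by simp
  show "Scorr (red_BC (proj \<psi>)) = 4 * frob_norm2 2 (rdm_A \<psi>) + (vec_norm2 \<psi>)\<^sup>2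
      - 2 * frob_norm2 2 (rdm_B \<psi>) - 2 * frob_norm2 2 (rdm_C \<psi>)"
    unfolding red_BC_proj[OF c] S P frob_rank2_slice_BC trace_rank2_slices by simp
qed

text \<open>With purities \<open>P\<^sub>X \<ge> 1/2\<close> and \<open>2 |det T| \<le> \<parallel>T\<parallel>\<^sup>2\<close> for two of the slices, e.g.
  \<open>S\<^sub>A\<^sub>B + 2\<tau> = 4 P\<^sub>C + 1 - 2 P\<^sub>A - 2 P\<^sub>B + 8 |det T| \<le> 5 - 2 P\<^sub>A - 2 P\<^sub>B \<le> 3\<close>.\<close>
lemma Smax_proj_tau_pure_le:
  assumes u: "unit_vec8 \<psi>"
  shows "Smax (proj \<psi>) + 2 * tau_pure \<psi> \<le> 3"
proof -
  have c: "\<psi> \<in> carrier_vec 8" and N: "vec_norm2 \<psi> = 1"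
    using u unfolding unit_vec8_def vec_norm2_def by simp_all
  define D where "D = cmod (flip_det (slice_BC \<psi>))"
  have T: "2 * D \<le> frob_norm2 2 (flip_form (slice_AB \<psi>))"
    "2 * D \<le> frob_norm2 2 (flip_form (slice_AC \<psi>))"
    "2 * D \<le> frob_norm2 2 (flip_form (slice_BC \<psi>))"
    using flip_det_le_frob_norm2[of "slice_AB \<psi>"] flip_det_le_frob_norm2[of "slice_AC \<psi>"]
      flip_det_le_frob_norm2[of "slice_BC \<psi>"]
    unfolding D_def flip_det_slice_AB flip_det_slice_AC by simp_all
  have P: "1 \<le> 2 * frob_norm2 2 (rdm_A \<psi>)" "1 \<le> 2 * frob_norm2 2 (rdm_B \<psi>)"
    "1 \<le> 2 * frob_norm2 2 (rdm_C \<psi>)"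
    using trace_square_le_frob_norm2[of "rdm_A \<psi>"] trace_square_le_frob_norm2[of "rdm_B \<psi>"]
      trace_square_le_frob_norm2[of "rdm_C \<psi>"]
    unfolding trace_rdms N by simp_all
  note CKW = frob_flip_slice_AB_AC[of \<psi>] frob_flip_slice_AB_BC[of \<psi>] frob_flip_slice_AC_BC[of \<psi>]
  note bounds = T P CKW[unfolded N power_one mult_1_right]
  have "Scorr (red_AB (proj \<psi>)) + 2 * tau_pure \<psi> \<le> 3"
    unfolding Scorr_red_proj[OF c] tau_pure_eq[OF u] D_def[symmetric] N power_one using bounds by linarith
  moreover have "Scorr (red_AC (proj \<psi>)) + 2 * tau_pure \<psi> \<le> 3"
    unfolding Scorr_red_proj[OF c] tau_pure_eq[OF u] D_def[symmetric] N power_one using bounds by linarith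
  moreover have "Scorr (red_BC (proj \<psi>)) + 2 * tau_pure \<psi> \<le> 3"
    unfolding Scorr_red_proj[OF c] tau_pure_eq[OF u] D_def[symmetric] N power_one using bounds by linarith
  ultimately show ?thesis unfolding Smax_def by (auto simp: max_def)
qed

section \<open>Gram decompositions of positive semidefinite matrices\<close>

definition quad_form :: "nat \<Rightarrow> (nat \<Rightarrow> nat \<Rightarrow> complex) \<Rightarrow> (nat \<Rightarrow> complex) \<Rightarrow> complex" where
  "quad_form n A x = (\<Sum>i<n. \<Sum>j<n. cnj (x i) * A i j * x j)"

lemma sum_mult_delta_right:
  "(m::nat) < n \<Longrightarrow> (\<Sum>j<n. c j * (if j = m then \<alpha> else 0)) = c m * (\<alpha>::complex)"
proof -
  assume m: "m < n"
  have "(\<Sum>j<n. c j * (if j = m then \<alpha> else 0)) = (\<Sum>j<n. if j = m then c j * \<alpha> else 0)"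
    by (rule sum.cong) auto
  also have "\<dots> = c m * \<alpha>" using m by (simp add: sum.delta[OF finite_lessThan])
  finally show ?thesis .
qed

lemma sum_mult_delta_left:
  "(m::nat) < n \<Longrightarrow> (\<Sum>j<n. (if j = m then \<alpha> else 0) * c j) = (\<alpha>::complex) * c m"
  using sum_mult_delta_right[of m n c \<alpha>] by (simp add: mult.commute)

lemma quad_form_shift:
  assumes m: "m < n"
  shows "quad_form n A (\<lambda>i. x i - (if i = m then \<alpha> else 0)) =
     quad_form n A x - cnj \<alpha> * (\<Sum>j<n. A m j * x j) - (\<Sum>i<n. cnj (x i) * A i m) * \<alpha> + cnj \<alpha> * A m m * \<alpha>"
proof -
  let ?d = "\<lambda>i. (if i = m then \<alpha> else 0)"
  have e: "cnj (x i - ?d i) * A i j * (x j - ?d j) =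
     cnj (x i) * A i j * x j - cnj (x i) * A i j * ?d j - cnj (?d i) * (A i j * x j) + cnj (?d i) * (A i j * ?d j)" for i j
    by (simp add: algebra_simps)
  have cd: "cnj (?d i) = (if i = m then cnj \<alpha> else 0)" for i by simp
  have "(\<Sum>j<n. cnj (x i) * A i j * ?d j) = cnj (x i) * A i m * \<alpha>" for i
    using sum_mult_delta_right[OF m, of "\<lambda>j. cnj (x i) * A i j"] by simp
  then have s1: "(\<Sum>i<n. \<Sum>j<n. cnj (x i) * A i j * ?d j) = (\<Sum>i<n. cnj (x i) * A i m) * \<alpha>"
    by (simp add: sum_distrib_right)
  have "(\<Sum>j<n. cnj (?d i) * (A i j * x j)) = cnj (?d i) * (\<Sum>j<n. A i j * x j)" for i
    by (simp add: sum_distrib_left)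
  then have s2: "(\<Sum>i<n. \<Sum>j<n. cnj (?d i) * (A i j * x j)) = cnj \<alpha> * (\<Sum>j<n. A m j * x j)"
    using sum_mult_delta_left[OF m, of "cnj \<alpha>" "\<lambda>i. \<Sum>j<n. A i j * x j"] unfolding cd by simp
  have "(\<Sum>j<n. cnj (?d i) * (A i j * ?d j)) = cnj (?d i) * (A i m * \<alpha>)" for i
    using sum_mult_delta_right[OF m, of "\<lambda>j. cnj (?d i) * A i j" \<alpha>] by (simp add: mult.assoc)
  then have s3: "(\<Sum>i<n. \<Sum>j<n. cnj (?d i) * (A i j * ?d j)) = cnj \<alpha> * A m m * \<alpha>"
    using sum_mult_delta_left[OF m, of "cnj \<alpha>" "\<lambda>i. A i m * \<alpha>"] unfolding cd by (simp add: mult.assoc)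
  show ?thesis
    unfolding quad_form_def e sum_subtractf sum.distrib s1 s2 s3 by simp
qed

definition hermitian_fun :: "nat \<Rightarrow> (nat \<Rightarrow> nat \<Rightarrow> complex) \<Rightarrow> bool" where
  "hermitian_fun n A \<longleftrightarrow> (\<forall>i<n. \<forall>j<n. A j i = cnj (A i j))"

definition psd_fun :: "nat \<Rightarrow> (nat \<Rightarrow> nat \<Rightarrow> complex) \<Rightarrow> bool" where
  "psd_fun n A \<longleftrightarrow> (\<forall>x. 0 \<le> Re (quad_form n A x))"

definition vanishing_upto :: "nat \<Rightarrow> nat \<Rightarrow> (nat \<Rightarrow> nat \<Rightarrow> complex) \<Rightarrow> bool" where
  "vanishing_upto n m A \<longleftrightarrow> (\<forall>i<n. \<forall>j<n. (i < m \<or> j < m) \<longrightarrow> A i j = 0)"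

definition schur_compl :: "nat \<Rightarrow> (nat \<Rightarrow> nat \<Rightarrow> complex) \<Rightarrow> nat \<Rightarrow> nat \<Rightarrow> complex" where
  "schur_compl m A i j = A i j - A i m * A m j / A m m"

lemma quad_form_zero: "quad_form n A (\<lambda>i. 0) = 0"
  by (simp add: quad_form_def)

lemma quad_form_delta:
  assumes q: "q < n"
  shows "quad_form n A (\<lambda>i. if i = q then \<gamma> else 0) = cnj \<gamma> * A q q * \<gamma>"
proof -
  have e: "(\<lambda>i. if i = q then \<gamma> else 0) = (\<lambda>i. (0::complex) - (if i = q then - \<gamma> else 0))"
    by auto
  show ?thesis unfolding e quad_form_shift[OF q] quad_form_zero by simp
qed

lemma quad_form_rank1_update:
  "quad_form n (\<lambda>i j. A i j - A i m * A m j / a) x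
    = quad_form n A x - (\<Sum>i<n. cnj (x i) * A i m) * (\<Sum>j<n. A m j * x j) / a"
proof -
  have e: "cnj (x i) * (A i j - A i m * A m j / a) * x j
      = cnj (x i) * A i j * x j - (cnj (x i) * A i m) * (A m j * x j) / a" for i j
    by (simp add: algebra_simps)
  show ?thesis unfolding quad_form_def e sum_subtractf sum_product sum_divide_distrib by simp
qed

lemma hermitian_col_sum:
  assumes h: "hermitian_fun n A" and m: "m < n"
  shows "(\<Sum>i<n. cnj (x i) * A i m) = cnj (\<Sum>j<n. A m j * x j)"
proof -
  have "(\<Sum>i<n. cnj (x i) * A i m) = (\<Sum>i<n. cnj (A m i * x i))"
  proof (rule sum.cong)
    fix i assume "i \<in> {..<n}"
    then have "A i m = cnj (A m i)" using h m unfolding hermitian_fun_def by blast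
    then show "cnj (x i) * A i m = cnj (A m i * x i)" by (simp add: mult.commute)
  qed simp
  then show ?thesis by (simp add: cnj_sum)
qed


lemma hermitian_diag_real: "hermitian_fun n A \<Longrightarrow> m < n \<Longrightarrow> cnj (A m m) = A m m"
  unfolding hermitian_fun_def by metis

lemma psd_diag_nonneg:
  assumes p: "psd_fun n A" and m: "m < n"
  shows "0 \<le> Re (A m m)"
proof -
  have "0 \<le> Re (quad_form n A (\<lambda>i. if i = m then 1 else 0))" using p unfolding psd_fun_def by blast
  then show ?thesis by (simp add: quad_form_delta[OF m])
qed

text \<open>If \<open>A m m = 0 \<noteq> A m q\<close>, a suitable multiple of the \<open>m\<close>-th unit vector subtracted
  from the \<open>q\<close>-th makes the quadratic form negative.\<close>
lemma psd_zero_diag_row: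
  assumes h: "hermitian_fun n A" and p: "psd_fun n A" and pn: "m < n" and qn: "q < n"
    and a0: "A m m = 0"
  shows "A m q = 0"
proof (rule ccontr)
  assume b0: "A m q \<noteq> 0"
  define b where "b = A m q"
  have hq: "A q m = cnj b" using h pn qn unfolding hermitian_fun_def b_def by blast
  define t where "t = (Re (A q q) + 1) / (2 * (cmod b)^2)"
  have bpos: "0 < (cmod b)^2" using b0 b_def by simp
  define x where "x = (\<lambda>i. if i = q then (1::complex) else 0)"
  define \<alpha> where "\<alpha> = complex_of_real t * b"
  have s1: "(\<Sum>j<n. A m j * x j) = b"
    unfolding x_def b_def using sum_mult_delta_right[OF qn, of "\<lambda>j. A m j" 1] by simp
  have cx: "cnj (x i) = (if i = q then 1 else 0)" for i by (simp add: x_def)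
  have s2: "(\<Sum>i<n. cnj (x i) * A i m) = cnj b"
    unfolding cx using sum_mult_delta_left[OF qn, of 1 "\<lambda>i. A i m"] hq by simp
  have Qx: "quad_form n A x = A q q" unfolding x_def quad_form_delta[OF qn] by simp
  have "0 \<le> Re (quad_form n A (\<lambda>i. x i - (if i = m then \<alpha> else 0)))" using p unfolding psd_fun_def by blast
  also have "quad_form n A (\<lambda>i. x i - (if i = m then \<alpha> else 0)) = A q q - cnj \<alpha> * b - cnj b * \<alpha>"
    unfolding quad_form_shift[OF pn] s1 s2 Qx a0 by simp
  also have "Re (A q q - cnj \<alpha> * b - cnj b * \<alpha>) = Re (A q q) - 2 * t * (cmod b)^2"
    unfolding \<alpha>_def cmod_power2 by (simp add: algebra_simps power2_eq_square)
  also have "\<dots> = -1" unfolding t_def using bpos by (simp add: field_simps)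
  finally show False by simp
qed

lemma vanishing_upto_Suc_zero_diag:
  assumes h: "hermitian_fun n A" and p: "psd_fun n A" and z: "vanishing_upto n m A" and m: "m < n"
    and a0: "A m m = 0"
  shows "vanishing_upto n (Suc m) A"
  unfolding vanishing_upto_def
proof (intro allI impI)
  fix i j assume i: "i < n" and j: "j < n" and ij: "i < Suc m \<or> j < Suc m"
  have r0: "A m k = 0" if "k < n" for k using psd_zero_diag_row[OF h p m that a0] .
  show "A i j = 0"
  proof (cases "i < m \<or> j < m")
    case True then show ?thesis using z i j unfolding vanishing_upto_def by blast
  next
    case False
    then have "i = m \<or> j = m" using ij by auto
    moreover have "A i m = cnj (A m i)" using h i m unfolding hermitian_fun_def by blast
    ultimately show ?thesis using r0 i j by auto
  qed
qed

lemma hermitian_schur_compl: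
  assumes h: "hermitian_fun n A" and m: "m < n"
  shows "hermitian_fun n (schur_compl m A)"
  unfolding hermitian_fun_def
proof (intro allI impI)
  fix i j assume i: "i < n" and j: "j < n"
  have "A j i = cnj (A i j)" "A j m = cnj (A m j)" "A m i = cnj (A i m)"
    using h i j m unfolding hermitian_fun_def by blast+
  then show "schur_compl m A j i = cnj (schur_compl m A i j)"
    unfolding schur_compl_def using hermitian_diag_real[OF h m] by (simp add: mult.commute)
qed

lemma psd_schur_compl:
  assumes h: "hermitian_fun n A" and p: "psd_fun n A" and m: "m < n" and a: "A m m \<noteq> 0"
  shows "psd_fun n (schur_compl m A)"
  unfolding psd_fun_def
proof
  fix x
  define s where "s = (\<Sum>j<n. A m j * x j)"
  have col: "(\<Sum>i<n. cnj (x i) * A i m) = cnj s" unfolding s_def by (rule hermitian_col_sum[OF h m])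
  have "quad_form n (schur_compl m A) x = quad_form n A x - cnj s * s / A m m"
    unfolding schur_compl_def quad_form_rank1_update col s_def by simp
  also have "\<dots> = quad_form n A (\<lambda>i. x i - (if i = m then s / A m m else 0))"
    unfolding quad_form_shift[OF m] col s_def[symmetric] using a hermitian_diag_real[OF h m]
    by (simp add: field_simps s_def)
  finally show "0 \<le> Re (quad_form n (schur_compl m A) x)" using p unfolding psd_fun_def by simp
qed

lemma vanishing_upto_schur_compl:
  assumes z: "vanishing_upto n m A" and m: "m < n" and a: "A m m \<noteq> 0"
  shows "vanishing_upto n (Suc m) (schur_compl m A)"
  unfolding vanishing_upto_def
proof (intro allI impI)
  fix i j assume i: "i < n" and j: "j < n" and ij: "i < Suc m \<or> j < Suc m"
  have zz: "A k l = 0" if "k < n" "l < n" "k < m \<or> l < m" for k l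
    using z that unfolding vanishing_upto_def by blast
  consider "i < m" | "j < m" | "i = m \<or> j = m" using ij by linarith
  then show "schur_compl m A i j = 0"
    by cases (use zz[OF i j] zz[OF i m] zz[OF m j] a in \<open>auto simp: schur_compl_def\<close>)
qed

lemma psd_split_rank1:
  assumes h: "hermitian_fun n A" and p: "psd_fun n A" and z: "vanishing_upto n m A" and m: "m < n"
  shows "\<exists>v B. hermitian_fun n B \<and> psd_fun n B \<and> vanishing_upto n (Suc m) B
    \<and> (\<forall>i<n. \<forall>j<n. A i j = v i * cnj (v j) + B i j)"
proof (cases "A m m = 0")
  case True
  then show ?thesis
    using h p vanishing_upto_Suc_zero_diag[OF h p z m] by (intro exI[of _ "\<lambda>i. 0"] exI[of _ A]) auto
next
  case False
  define a where "a = A m m"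
  have aR: "a = complex_of_real (Re a)"
    using hermitian_diag_real[OF h m] unfolding a_def by (simp add: complex_eq_iff)
  define sq where "sq = complex_of_real (sqrt (Re a))"
  have "sq * cnj sq = complex_of_real (sqrt (Re a) * sqrt (Re a))"
    unfolding sq_def by (simp only: complex_cnj_complex_of_real of_real_mult)
  also have "\<dots> = complex_of_real (Re a)" using psd_diag_nonneg[OF p m] unfolding a_def by simp
  finally have sq: "sq * cnj sq = a" using aR by simp
  have "A i j = A i m / sq * cnj (A j m / sq) + schur_compl m A i j" if "i < n" "j < n" for i j
  proof -
    have "A i m / sq * cnj (A j m / sq) = A i m * cnj (A j m) / (sq * cnj sq)" by simp
    also have "cnj (A j m) = A m j" using h m that unfolding hermitian_fun_def by (metis complex_cnj_cnj)
    finally show ?thesis unfolding schur_compl_def sq a_def by simp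
  qed
  then show ?thesis
    using hermitian_schur_compl[OF h m] psd_schur_compl[OF h p m False]
      vanishing_upto_schur_compl[OF z m False]
    by (intro exI[of _ "\<lambda>i. A i m / sq"] exI[of _ "schur_compl m A"]) blast
qed

lemma psd_gram_decomposition_upto:
  assumes "m \<le> n"
  shows "\<forall>A. hermitian_fun n A \<longrightarrow> psd_fun n A \<longrightarrow> vanishing_upto n m A \<longrightarrow>
     (\<exists>vs. \<forall>i<n. \<forall>j<n. A i j = (\<Sum>v\<leftarrow>vs. v i * cnj (v j)))"
  using assms
proof (induction m rule: inc_induct)
  case base
  show ?case
  proof (intro allI impI)
    fix A assume "vanishing_upto n n A"
    then have "\<forall>i<n. \<forall>j<n. A i j = (\<Sum>v\<leftarrow>[]. v i * cnj (v j))" unfolding vanishing_upto_def by simp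
    then show "\<exists>vs. \<forall>i<n. \<forall>j<n. A i j = (\<Sum>v\<leftarrow>vs. v i * cnj (v j))" by blast
  qed
next
  case (step m)
  show ?case
  proof (intro allI impI)
    fix A assume h: "hermitian_fun n A" and p: "psd_fun n A" and z: "vanishing_upto n m A"
    obtain v B where B: "hermitian_fun n B" "psd_fun n B" "vanishing_upto n (Suc m) B" and d: "\<forall>i<n. \<forall>j<n. A i j = v i * cnj (v j) + B i j"
      using psd_split_rank1[OF h p z step(2)] by blast
    obtain vs where vs: "\<forall>i<n. \<forall>j<n. B i j = (\<Sum>v\<leftarrow>vs. v i * cnj (v j))" using step(3) B by blast
    have "\<forall>i<n. \<forall>j<n. A i j = (\<Sum>w\<leftarrow>v # vs. w i * cnj (w j))" using d vs by simp
    then show "\<exists>vs. \<forall>i<n. \<forall>j<n. A i j = (\<Sum>v\<leftarrow>vs. v i * cnj (v j))" by blast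
  qed
qed

lemma psd_gram_decomposition:
  assumes "hermitian_fun n A" "psd_fun n A"
  shows "\<exists>vs. \<forall>i<n. \<forall>j<n. A i j = (\<Sum>v\<leftarrow>vs. v i * cnj (v j))"
  using psd_gram_decomposition_upto[of 0 n] assms unfolding vanishing_upto_def by auto


section \<open>Mixed states\<close>

lemma sum_list_pairs_conv_sum_nth:
  "(\<Sum>(p,\<psi>)\<leftarrow>ds. f p \<psi>) = (\<Sum>n<length ds. f (fst (ds!n)) (snd (ds!n)))"
  unfolding sum_list_sum_nth by (simp add: atLeast0LessThan case_prod_beta)

lemma sum_list_sum_swap:
  "sum_list (map (\<lambda>v. \<Sum>i\<in>I. g v i) xs) = (\<Sum>i\<in>I. sum_list (map (\<lambda>v. g v i) xs))"
  by (induction xs) (simp_all add: sum.distrib)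

lemma Re_sum_list: "Re (sum_list (map g xs)) = sum_list (map (\<lambda>x. Re (g x)) xs)"
  by (induction xs) simp_all

lemma density_matrix_gram:
  assumes d: "density_matrix 8 \<rho>"
  shows "\<exists>vs. \<forall>i<8. \<forall>j<8. \<rho> $$ (i,j) = (\<Sum>v\<leftarrow>vs. v i * cnj (v j))"
proof -
  have c: "\<rho> \<in> carrier_mat 8 8" and adj: "adjoint \<rho> = \<rho>"
    and ps: "\<And>v. v \<in> carrier_vec 8 \<Longrightarrow> Re (\<Sum>i<8. \<Sum>j<8. cnj (v $ i) * \<rho> $$ (i,j) * v $ j) \<ge> 0"
    using d unfolding density_matrix_def by auto
  have "hermitian_fun 8 (\<lambda>i j. \<rho> $$ (i,j))" unfolding hermitian_fun_def
  proof (intro allI impI)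
    fix i j :: nat assume i: "i < 8" and j: "j < 8"
    have "\<rho> $$ (j,i) = adjoint \<rho> $$ (j,i)" using adj by simp
    also have "\<dots> = cnj (\<rho> $$ (i,j))" using c i j by (simp add: adjoint_def)
    finally show "\<rho> $$ (j,i) = cnj (\<rho> $$ (i,j))" .
  qed
  moreover have "psd_fun 8 (\<lambda>i j. \<rho> $$ (i,j))" unfolding psd_fun_def
  proof
    fix x :: "nat \<Rightarrow> complex"
    have "(\<Sum>i<8. \<Sum>j<8. cnj (vec 8 x $ i) * \<rho> $$ (i,j) * vec 8 x $ j) = quad_form 8 (\<lambda>i j. \<rho> $$ (i,j)) x"
      unfolding quad_form_def by (intro sum.cong refl) simp
    moreover have "Re (\<Sum>i<8. \<Sum>j<8. cnj (vec 8 x $ i) * \<rho> $$ (i,j) * vec 8 x $ j) \<ge> 0" by (rule ps) simp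
    ultimately show "0 \<le> Re (quad_form 8 (\<lambda>i j. \<rho> $$ (i,j)) x)" by simp
  qed
  ultimately show ?thesis by (rule psd_gram_decomposition)
qed

lemma gram_trace:
  assumes c: "\<rho> \<in> carrier_mat 8 8"
    and vs: "\<forall>i<8. \<forall>j<8. \<rho> $$ (i,j) = (\<Sum>v\<leftarrow>vs. v i * cnj (v j))"
  shows "(\<Sum>v\<leftarrow>vs. \<Sum>i<8. (cmod (v i))\<^sup>2) = Re (mtrace \<rho>)"
proof -
  have "(\<Sum>v\<leftarrow>vs. \<Sum>i<8. (cmod (v i))\<^sup>2) = (\<Sum>i<8. \<Sum>v\<leftarrow>vs. (cmod (v i))\<^sup>2)"
    by (rule sum_list_sum_swap)
  also have "\<dots> = (\<Sum>i<8. Re (\<rho> $$ (i,i)))"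
    using vs by (intro sum.cong refl) (simp add: Re_sum_list cmod_power2_eq_mult_cnj[symmetric])
  also have "\<dots> = Re (mtrace \<rho>)" using c unfolding mtrace_def by (simp add: Re_sum)
  finally show ?thesis .
qed

lemma normalize_vec8:
  fixes v :: "nat \<Rightarrow> complex"
  assumes r: "r = (\<Sum>i<8. (cmod (v i))\<^sup>2)" "r \<noteq> 0"
  shows "unit_vec8 (vec 8 (\<lambda>i. v i / of_real (sqrt r)))"
    and "complex_of_real r * (v i / of_real (sqrt r) * cnj (v j / of_real (sqrt r))) = v i * cnj (v j)"
proof -
  have pos: "0 < r" using r by (simp add: sum_nonneg order_le_neq_trans)
  have "(\<Sum>i<8. (cmod (vec 8 (\<lambda>i. v i / of_real (sqrt r)) $ i))\<^sup>2) = (\<Sum>i<8. (cmod (v i))\<^sup>2 / r)"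
    by (intro sum.cong refl) (simp add: norm_divide power_divide pos less_imp_le)
  also have "\<dots> = 1" using pos unfolding sum_divide_distrib[symmetric] r(1)[symmetric] by simp
  finally show "unit_vec8 (vec 8 (\<lambda>i. v i / of_real (sqrt r)))" unfolding unit_vec8_def by simp
  have "of_real (sqrt r) * cnj (of_real (sqrt r)) = complex_of_real r"
    using pos by (simp flip: of_real_mult)
  moreover have "complex_of_real (sqrt r) \<noteq> 0" using pos by simp
  ultimately show "complex_of_real r * (v i / of_real (sqrt r) * cnj (v j / of_real (sqrt r))) = v i * cnj (v j)"
    by (simp add: field_simps)
qed

lemma pure_decomp_exists:
  assumes d: "density_matrix 8 \<rho>"
  shows "\<exists>ds. pure_decomp \<rho> ds"
proof -
  have c: "\<rho> \<in> carrier_mat 8 8" and tr: "mtrace \<rho> = 1"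
    using d unfolding density_matrix_def by auto
  obtain vs where vs: "\<forall>i<8. \<forall>j<8. \<rho> $$ (i,j) = (\<Sum>v\<leftarrow>vs. v i * cnj (v j))"
    using density_matrix_gram[OF d] by blast
  define nv where "nv = (\<lambda>v::nat \<Rightarrow> complex. \<Sum>i<8. (cmod (v i))\<^sup>2)"
  define ds where "ds = map (\<lambda>v. (nv v, vec 8 (\<lambda>i. v i / of_real (sqrt (nv v))))) (filter (\<lambda>v. nv v \<noteq> 0) vs)"
  have nv0: "0 \<le> nv v" for v unfolding nv_def by (simp add: sum_nonneg)
  have zero: "v i = 0" if "nv v = 0" "i < 8" for v i
    using that sum_nonneg_eq_0_iff[of "{..<8}" "\<lambda>i. (cmod (v i))\<^sup>2"] unfolding nv_def by simp
  have "\<forall>(p,\<psi>) \<in> set ds. p \<ge> 0 \<and> unit_vec8 \<psi>"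
    unfolding ds_def using nv0 normalize_vec8(1)[OF nv_def[THEN fun_cong]] by auto
  moreover have "(\<Sum>(p,\<psi>)\<leftarrow>ds. p) = 1"
  proof -
    have "(\<Sum>(p,\<psi>)\<leftarrow>ds. p) = sum_list (map nv (filter (\<lambda>v. nv v \<noteq> 0) vs))"
      unfolding ds_def by (simp add: comp_def)
    also have "\<dots> = sum_list (map nv vs)" by (rule sum_list_map_filter) simp
    also have "\<dots> = Re (mtrace \<rho>)" unfolding nv_def by (rule gram_trace[OF c vs])
    finally show ?thesis using tr by simp
  qed
  moreover have "\<rho> = mat 8 8 (\<lambda>(i,j). \<Sum>(p,\<psi>)\<leftarrow>ds. complex_of_real p * (\<psi> $ i * cnj (\<psi> $ j)))"
  proof (rule eq_matI)
    fix i j assume "i < dim_row (mat 8 8 (\<lambda>(i,j). \<Sum>(p,\<psi>)\<leftarrow>ds. complex_of_real p * (\<psi> $ i * cnj (\<psi> $ j))))"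
      and "j < dim_col (mat 8 8 (\<lambda>(i,j). \<Sum>(p,\<psi>)\<leftarrow>ds. complex_of_real p * (\<psi> $ i * cnj (\<psi> $ j))))"
    then have i: "i < 8" and j: "j < 8" by auto
    let ?s = "\<lambda>v. complex_of_real (sqrt (nv v))"
    have "(\<Sum>(p,\<psi>)\<leftarrow>ds. complex_of_real p * (\<psi> $ i * cnj (\<psi> $ j)))
        = sum_list (map (\<lambda>v. complex_of_real (nv v) * (v i / ?s v * cnj (v j / ?s v)))
            (filter (\<lambda>v. nv v \<noteq> 0) vs))"
      unfolding ds_def using i j by (simp add: comp_def)
    also have "\<dots> = sum_list (map (\<lambda>v. v i * cnj (v j)) (filter (\<lambda>v. nv v \<noteq> 0) vs))"
    proof (intro arg_cong[where f = sum_list] map_cong refl)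
      fix v assume "v \<in> set (filter (\<lambda>v. nv v \<noteq> 0) vs)"
      then have "nv v \<noteq> 0" by simp
      then show "complex_of_real (nv v) * (v i / ?s v * cnj (v j / ?s v)) = v i * cnj (v j)"
        by (rule normalize_vec8(2)[OF nv_def[THEN fun_cong]])
    qed
    also have "\<dots> = sum_list (map (\<lambda>v. v i * cnj (v j)) vs)"
      by (rule sum_list_map_filter) (use zero i in auto)
    also have "\<dots> = \<rho> $$ (i,j)" using vs i j by auto
    finally show "\<rho> $$ (i,j) = mat 8 8 (\<lambda>(i,j). \<Sum>(p,\<psi>)\<leftarrow>ds. complex_of_real p * (\<psi> $ i * cnj (\<psi> $ j))) $$ (i,j)"
      using i j by simp
  qed (use c in auto)
  ultimately show ?thesis unfolding pure_decomp_def by blast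
qed


lemma weighted_mean_square_le:
  fixes p x :: "'a \<Rightarrow> real"
  assumes fin: "finite I" and p: "\<And>i. i \<in> I \<Longrightarrow> 0 \<le> p i" and sp: "sum p I = 1"
  shows "(\<Sum>i\<in>I. p i * x i)^2 \<le> (\<Sum>i\<in>I. p i * (x i)^2)"
proof -
  define \<mu> where "\<mu> = (\<Sum>i\<in>I. p i * x i)"
  have "0 \<le> (\<Sum>i\<in>I. p i * (x i - \<mu>)^2)" using p by (intro sum_nonneg) simp
  also have "(\<Sum>i\<in>I. p i * (x i - \<mu>)^2) = (\<Sum>i\<in>I. p i * (x i)^2) - 2 * \<mu> * (\<Sum>i\<in>I. p i * x i) + \<mu>^2 * sum p I"
  proof -
    have "p i * (x i - \<mu>)^2 = p i * (x i)^2 - 2 * \<mu> * (p i * x i) + \<mu>^2 * p i" for i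
      by (simp add: power2_diff algebra_simps)
    then show ?thesis by (simp add: sum.distrib sum_subtractf sum_distrib_left)
  qed
  finally show ?thesis unfolding sp \<mu>_def[symmetric] by (simp add: power2_eq_square)
qed

lemma Scorr_mixture_le:
  fixes m :: nat and p :: "nat \<Rightarrow> real"
  assumes M: "M \<in> carrier_mat 4 4" and Ms: "\<And>n. n < m \<Longrightarrow> Mn n \<in> carrier_mat 4 4"
  and ent: "\<And>i j. i < 4 \<Longrightarrow> j < 4 \<Longrightarrow> M$$(i,j) = (\<Sum>n<m. complex_of_real (p n) * Mn n $$ (i,j))"
  and p: "\<And>n. n < m \<Longrightarrow> 0 \<le> p n" and sp: "(\<Sum>n<m. p n) = 1"
  shows "Scorr M \<le> (\<Sum>n<m. p n * Scorr (Mn n))"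
proof -
  have t: "tcorr M k l = (\<Sum>n<m. complex_of_real (p n) * tcorr (Mn n) k l)" for k l
  proof -
    have "tcorr M k l = (\<Sum>i<4. \<Sum>j<4. (\<Sum>n<m. complex_of_real (p n) * Mn n $$ (i,j)) * (pauli k $$ (j div 2, i div 2) * pauli l $$ (j mod 2, i mod 2)))"
      unfolding tcorr_eq_sum[OF M] by (intro sum.cong refl) (simp add: ent)
    also have "\<dots> = (\<Sum>n<m. complex_of_real (p n) * (\<Sum>i<4. \<Sum>j<4. Mn n $$ (i,j) * (pauli k $$ (j div 2, i div 2) * pauli l $$ (j mod 2, i mod 2))))"
      by (simp add: sum_distrib_left sum_distrib_right sum.swap[of _ "{..<m}"] mult.assoc)
    also have "\<dots> = (\<Sum>n<m. complex_of_real (p n) * tcorr (Mn n) k l)"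
      by (intro sum.cong refl) (simp add: tcorr_eq_sum[OF Ms])
    finally show ?thesis .
  qed
  have r: "Re (tcorr M k l) = (\<Sum>n<m. p n * Re (tcorr (Mn n) k l))" for k l
    unfolding t by (simp add: Re_sum)
  have J: "(\<Sum>n<m. p n * Re (tcorr (Mn n) k l))^2 \<le> (\<Sum>n<m. p n * (Re (tcorr (Mn n) k l))^2)" for k l
    using weighted_mean_square_le[of "{..<m}" p "\<lambda>n. Re (tcorr (Mn n) k l)"] p sp by auto
  have "Scorr M = (\<Sum>k\<in>{1..3}. \<Sum>l\<in>{1..3}. (\<Sum>n<m. p n * Re (tcorr (Mn n) k l))^2)"
    unfolding Scorr_def r ..
  also have "\<dots> \<le> (\<Sum>k\<in>{1..3}. \<Sum>l\<in>{1..3}. \<Sum>n<m. p n * (Re (tcorr (Mn n) k l))^2)"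
    by (intro sum_mono J)
  also have "\<dots> = (\<Sum>n<m. p n * Scorr (Mn n))"
    unfolding Scorr_def by (simp add: sum_distrib_left sum.swap[of _ "{..<m}"])
  finally show ?thesis .
qed

lemma reduced_mixture:
  assumes ent: "\<And>i j. i < 8 \<Longrightarrow> j < 8 \<Longrightarrow> \<rho> $$ (i,j) = (\<Sum>n<m. complex_of_real (p n) * \<sigma> n $$ (i,j))"
    and R: "R \<in> {red_AB, red_AC, red_BC}" and ij: "i < 4" "j < 4"
  shows "R \<rho> $$ (i,j) = (\<Sum>n<m. complex_of_real (p n) * R (\<sigma> n) $$ (i,j))"
proof -
  have "i \<in> {0,1,2,3}" "j \<in> {0,1,2,3}" using ij by auto
  then show ?thesis
    using R by (auto simp: red_AB_def red_AC_def red_BC_def sum_lessThan_2 ent sum.distrib distrib_left)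
qed

lemma Scorr_le_decomp:
  assumes pd: "pure_decomp \<rho> ds" and R: "R \<in> {red_AB, red_AC, red_BC}"
  shows "Scorr (R \<rho>) \<le> (\<Sum>(p,\<psi>)\<leftarrow>ds. p * Smax (proj \<psi>))"
proof -
  define m where "m = length ds"
  define p where "p = (\<lambda>n. fst (ds!n))"
  define \<psi> where "\<psi> = (\<lambda>n. snd (ds!n))"
  have mem: "n < m \<Longrightarrow> (p n, \<psi> n) \<in> set ds" for n unfolding m_def p_def \<psi>_def by simp
  have p0: "n < m \<Longrightarrow> 0 \<le> p n" and u: "n < m \<Longrightarrow> unit_vec8 (\<psi> n)" for n
    using pd mem unfolding pure_decomp_def by auto
  have c: "n < m \<Longrightarrow> dim_vec (\<psi> n) = 8" for n
    using u unfolding unit_vec8_def by auto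
  have sp: "(\<Sum>n<m. p n) = 1"
    using pd unfolding pure_decomp_def sum_list_pairs_conv_sum_nth m_def p_def by simp
  have "\<rho> $$ (i,j) = (\<Sum>n<m. complex_of_real (p n) * proj (\<psi> n) $$ (i,j))" if "i < 8" "j < 8" for i j
  proof -
    have "\<rho> = mat 8 8 (\<lambda>(i,j). \<Sum>(p,\<psi>)\<leftarrow>ds. complex_of_real p * (\<psi> $ i * cnj (\<psi> $ j)))"
      using pd unfolding pure_decomp_def by blast
    then show ?thesis
      using that c unfolding sum_list_pairs_conv_sum_nth m_def p_def \<psi>_def by (simp add: proj_def)
  qed
  then have "Scorr (R \<rho>) \<le> (\<Sum>n<m. p n * Scorr (R (proj (\<psi> n))))"
  proof (intro Scorr_mixture_le)
    show "R \<rho> \<in> carrier_mat 4 4" "R (proj (\<psi> n)) \<in> carrier_mat 4 4" for n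
      using R by (auto simp: red_AB_def red_AC_def red_BC_def)
    show "R \<rho> $$ (i,j) = (\<Sum>n<m. complex_of_real (p n) * R (proj (\<psi> n)) $$ (i,j))"
      if "\<And>i j. i < 8 \<Longrightarrow> j < 8 \<Longrightarrow> \<rho> $$ (i,j) = (\<Sum>n<m. complex_of_real (p n) * proj (\<psi> n) $$ (i,j))"
        "i < 4" "j < 4" for i j
      using reduced_mixture[OF that(1) R that(2,3)] .
  qed (use p0 sp in auto)
  also have "\<dots> \<le> (\<Sum>n<m. p n * Smax (proj (\<psi> n)))"
    using R p0 by (intro sum_mono mult_left_mono) (auto simp: Smax_def)
  also have "\<dots> = (\<Sum>(p,\<psi>)\<leftarrow>ds. p * Smax (proj \<psi>))"
    unfolding sum_list_pairs_conv_sum_nth m_def p_def \<psi>_def ..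
  finally show ?thesis .
qed

lemma Smax_le_decomp:
  assumes pd: "pure_decomp \<rho> ds"
  shows "Smax \<rho> \<le> 3 - 2 * (\<Sum>(p,\<psi>)\<leftarrow>ds. p * tau_pure \<psi>)"
proof -
  have ds: "\<And>p \<psi>. (p, \<psi>) \<in> set ds \<Longrightarrow> 0 \<le> p \<and> unit_vec8 \<psi>" and sp: "(\<Sum>(p,\<psi>)\<leftarrow>ds. p) = 1"
    using pd unfolding pure_decomp_def by auto
  have "p * Smax (proj \<psi>) \<le> p * (3 - 2 * tau_pure \<psi>)" if "(p, \<psi>) \<in> set ds" for p \<psi>
    using ds[OF that] Smax_proj_tau_pure_le[of \<psi>] by (intro mult_left_mono) auto
  then have "(\<Sum>(p,\<psi>)\<leftarrow>ds. p * Smax (proj \<psi>)) \<le> (\<Sum>(p,\<psi>)\<leftarrow>ds. p * (3 - 2 * tau_pure \<psi>))"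
    by (intro sum_list_mono) auto
  also have "\<dots> = 3 * (\<Sum>(p,\<psi>)\<leftarrow>ds. p) - 2 * (\<Sum>(p,\<psi>)\<leftarrow>ds. p * tau_pure \<psi>)"
    by (induction ds) (auto simp: algebra_simps)
  also have "\<dots> = 3 - 2 * (\<Sum>(p,\<psi>)\<leftarrow>ds. p * tau_pure \<psi>)" using sp by simp
  finally have "(\<Sum>(p,\<psi>)\<leftarrow>ds. p * Smax (proj \<psi>)) \<le> 3 - 2 * (\<Sum>(p,\<psi>)\<leftarrow>ds. p * tau_pure \<psi>)" .
  then show ?thesis
    using Scorr_le_decomp[OF pd, of red_AB] Scorr_le_decomp[OF pd, of red_AC]
      Scorr_le_decomp[OF pd, of red_BC]
    unfolding Smax_def by simp
qed

lemma decomp_tau_nonneg: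
  assumes "pure_decomp \<rho> ds"
  shows "0 \<le> (\<Sum>(p,\<psi>)\<leftarrow>ds. p * tau_pure \<psi>)"
proof -
  have "\<forall>(p,\<psi>) \<in> set ds. p \<ge> 0 \<and> unit_vec8 \<psi>" using assms unfolding pure_decomp_def by blast
  then show ?thesis
    by (intro sum_list_nonneg) (auto intro!: mult_nonneg_nonneg simp: tau_pure_eq)
qed

theorem theorem4:
  fixes \<rho> :: "complex mat"
  assumes "density_matrix 8 \<rho>"
  shows "Smax \<rho> + 2 * tau \<rho> \<le> 3"
proof -
  obtain ds where pd: "pure_decomp \<rho> ds" using pure_decomp_exists[OF assms] by blast
  let ?T = "{(\<Sum>(p,\<psi>)\<leftarrow>ds. p * tau_pure \<psi>) | ds. pure_decomp \<rho> ds}"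
  have "bdd_below ?T" by (rule bdd_belowI[of _ 0]) (auto intro: decomp_tau_nonneg)
  then have "tau \<rho> \<le> (\<Sum>(p,\<psi>)\<leftarrow>ds. p * tau_pure \<psi>)"
    unfolding tau_def by (rule cInf_lower[rotated]) (use pd in blast)
  then show ?thesis using Smax_le_decomp[OF pd] by linarith
qed

end
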